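(* Let $\alpha$ be a countably infinite order type with $\alpha=\omega\alpha'+n$, $n<\omega$. Let $S_\alpha:=\Omega(\alpha')\oplus n$ and $Q_\alpha:=I_{<\omega}(S_\alpha)$. Then $Q_\alpha\in\mathbb{J}_\alpha$, and for every sierpinskisation $S$ of $\alpha$ and $\omega$, $Q_\alpha$ is embeddable in $I_{<\omega}(S)$ by a map preserving finite joins.
   Context: A sierpinskisation of a countable order type $\beta$ and $\omega$ is a poset whose order is the intersection of two linear orders on its underlying set, one of type $\beta$ and one of type $\omega$; equivalently it is obtained from a bijection $\varphi:\mathbb{N}\to C$ onto a chain $C$ of type $\beta$ by setting $x\le y$ iff $x\le y$ in $\mathbb{N}$ and $\varphi(x)\le\varphi(y)$ in $C$. $\omega\alpha'$ is the ordered sum of $\alpha'$ copies of $\omega$, i.e. $\omega\times\alpha'$ ordered lexicographically with the $\alpha'$-coordinate dominant. A sierpinskisation of $\omega\alpha'$ and $\omega$ is monotonic if it comes from a bijection $\varphi:\mathbb{N}\to\omega\alpha'$ such that $\varphi^{-1}$ is order-preserving on each subset $\omega\times\{\beta\}$, $\beta\in\alpha'$; $\Omega(\alpha')$ denotes a monotonic sierpinskisation of $\omega\alpha'$ and $\omega$ (any two such embed in each other). $n$ denotes the $n$-element chain and $\oplus$ the direct sum (disjoint union, elements from different parts incomparable). $I_{<\omega}(S)$ is the set of finitely generated initial segments of $S$ ordered by inclusion. $\mathbb{J}_\alpha$ is the class of join-semilattices $P$ with a least element whose lattice $J(P)$ of ideals (non-empty up-directed initial segments, ordered by inclusion) contains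 a chain of type $I(\alpha)$, the type of the chain of all initial segments of a chain of type $\alpha$. A map preserves finite joins if $f(\bigvee X)=\bigvee f(X)$ for all finite $X$. *)

theory Defs
  imports Main "HOL-Library.Countable_Set"
begin

definition po_on :: "'a set \<Rightarrow> ('a \<Rightarrow> 'a \<Rightarrow> bool) \<Rightarrow> bool" where
  "po_on P le \<longleftrightarrow> (\<forall>x\<in>P. le x x) \<and>
     (\<forall>x\<in>P. \<forall>y\<in>P. le x y \<and> le y x \<longrightarrow> x = y) \<and>
     (\<forall>x\<in>P. \<forall>y\<in>P. \<forall>z\<in>P. le x y \<and> le y z \<longrightarrow> le x z)"

definition lin_on :: "'a set \<Rightarrow> ('a \<Rightarrow> 'a \<Rightarrow> bool) \<Rightarrow> bool" where
  "lin_on P le \<longleftrightarrow> po_on P le \<and> (\<forall>x\<in>P. \<forall>y\<in>P. le x y \<or> le y x)"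

definition order_iso :: "'a set \<Rightarrow> ('a \<Rightarrow> 'a \<Rightarrow> bool) \<Rightarrow> 'b set \<Rightarrow> ('b \<Rightarrow> 'b \<Rightarrow> bool) \<Rightarrow> bool" where
  "order_iso P le P' le' \<longleftrightarrow>
     (\<exists>h. bij_betw h P P' \<and> (\<forall>x\<in>P. \<forall>y\<in>P. le x y \<longleftrightarrow> le' (h x) (h y)))"

definition init_seg :: "'a set \<Rightarrow> ('a \<Rightarrow> 'a \<Rightarrow> bool) \<Rightarrow> 'a set \<Rightarrow> bool" where
  "init_seg P le X \<longleftrightarrow> X \<subseteq> P \<and> (\<forall>x\<in>X. \<forall>y\<in>P. le y x \<longrightarrow> y \<in> X)"

definition down :: "'a set \<Rightarrow> ('a \<Rightarrow> 'a \<Rightarrow> bool) \<Rightarrow> 'a set \<Rightarrow> 'a set" where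
  "down P le F = {y\<in>P. \<exists>x\<in>F. le y x}"

text \<open>$I_{<\omega}(P)$: the finitely generated initial segments (ordered by inclusion).\<close>
definition fin_inits :: "'a set \<Rightarrow> ('a \<Rightarrow> 'a \<Rightarrow> bool) \<Rightarrow> 'a set set" where
  "fin_inits P le = {X. \<exists>F. finite F \<and> F \<subseteq> P \<and> X = down P le F}"

definition ideal_of :: "'a set \<Rightarrow> ('a \<Rightarrow> 'a \<Rightarrow> bool) \<Rightarrow> 'a set \<Rightarrow> bool" where
  "ideal_of P le I \<longleftrightarrow> init_seg P le I \<and> I \<noteq> {} \<and>
     (\<forall>x\<in>I. \<forall>y\<in>I. \<exists>z\<in>I. le x z \<and> le y z)"

definition is_lub :: "'a set \<Rightarrow> ('a \<Rightarrow> 'a \<Rightarrow> bool) \<Rightarrow> 'a set \<Rightarrow> 'a \<Rightarrow> bool" where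
  "is_lub P le X s \<longleftrightarrow> s \<in> P \<and> (\<forall>x\<in>X. le x s) \<and> (\<forall>u\<in>P. (\<forall>x\<in>X. le x u) \<longrightarrow> le s u)"

definition join_semilattice_bot :: "'a set \<Rightarrow> ('a \<Rightarrow> 'a \<Rightarrow> bool) \<Rightarrow> bool" where
  "join_semilattice_bot P le \<longleftrightarrow> po_on P le \<and> (\<exists>b\<in>P. \<forall>x\<in>P. le b x) \<and>
     (\<forall>x\<in>P. \<forall>y\<in>P. \<exists>s. is_lub P le {x, y} s)"

text \<open>$P \in \mathbb{J}_\alpha$ where the chain $\alpha$ is given by (A, leA):
  $P$ is a join-semilattice with least element and $J(P)$ (ideals ordered by inclusion)
  contains a chain isomorphic to $I(\alpha)$ (initial segments of $\alpha$ by inclusion).\<close>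
definition in_J :: "'c set \<Rightarrow> ('c \<Rightarrow> 'c \<Rightarrow> bool) \<Rightarrow> 'a set \<Rightarrow> ('a \<Rightarrow> 'a \<Rightarrow> bool) \<Rightarrow> bool" where
  "in_J A leA P le \<longleftrightarrow> join_semilattice_bot P le \<and>
     (\<exists>f. (\<forall>X. init_seg A leA X \<longrightarrow> ideal_of P le (f X)) \<and>
          (\<forall>X Y. init_seg A leA X \<longrightarrow> init_seg A leA Y \<longrightarrow> (X \<subseteq> Y \<longleftrightarrow> f X \<subseteq> f Y)))"

definition join_pres_emb :: "'a set \<Rightarrow> ('a \<Rightarrow> 'a \<Rightarrow> bool) \<Rightarrow> 'b set \<Rightarrow> ('b \<Rightarrow> 'b \<Rightarrow> bool) \<Rightarrow> ('a \<Rightarrow> 'b) \<Rightarrow> bool" where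
  "join_pres_emb P le P' le' f \<longleftrightarrow> (\<forall>x\<in>P. f x \<in> P') \<and>
     (\<forall>x\<in>P. \<forall>y\<in>P. le x y \<longleftrightarrow> le' (f x) (f y)) \<and>
     (\<forall>X s. finite X \<longrightarrow> X \<subseteq> P \<longrightarrow> is_lub P le X s \<longrightarrow> is_lub P' le' (f ` X) (f s))"

text \<open>Lexicographic order on $\omega \times \alpha'$, the $\alpha'$-coordinate dominant.\<close>
definition omega_times_le :: "('b \<Rightarrow> 'b \<Rightarrow> bool) \<Rightarrow> nat \<times> 'b \<Rightarrow> nat \<times> 'b \<Rightarrow> bool" where
  "omega_times_le leB p q \<longleftrightarrow>
     (snd p \<noteq> snd q \<and> leB (snd p) (snd q)) \<or> (snd p = snd q \<and> fst p \<le> fst q)"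

definition omega_times_plus_le :: "('b \<Rightarrow> 'b \<Rightarrow> bool) \<Rightarrow> (nat \<times> 'b) + nat \<Rightarrow> (nat \<times> 'b) + nat \<Rightarrow> bool" where
  "omega_times_plus_le leB u v = (case (u, v) of
      (Inl p, Inl q) \<Rightarrow> omega_times_le leB p q
    | (Inl p, Inr j) \<Rightarrow> True
    | (Inr i, Inl q) \<Rightarrow> False
    | (Inr i, Inr j) \<Rightarrow> i \<le> j)"

definition omega_times_plus :: "'b set \<Rightarrow> nat \<Rightarrow> ((nat \<times> 'b) + nat) set" where
  "omega_times_plus B n = (UNIV \<times> B) <+> {..<n}"

text \<open>Sierpinskisation of the chain (via bijection \<psi> : nat \<rightarrow> C) and \<omega>.\<close>
definition sierp_le :: "('a \<Rightarrow> 'a \<Rightarrow> bool) \<Rightarrow> (nat \<Rightarrow> 'a) \<Rightarrow> nat \<Rightarrow> nat \<Rightarrow> bool" where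
  "sierp_le leC \<psi> x y \<longleftrightarrow> x \<le> y \<and> leC (\<psi> x) (\<psi> y)"

text \<open>\<phi> induces a monotonic sierpinskisation of $\omega\alpha'$ and $\omega$.\<close>
definition monotonic_sierp_map :: "'b set \<Rightarrow> (nat \<Rightarrow> nat \<times> 'b) \<Rightarrow> bool" where
  "monotonic_sierp_map B \<phi> \<longleftrightarrow> bij_betw \<phi> UNIV (UNIV \<times> B) \<and>
     (\<forall>b\<in>B. \<forall>m m'. m \<le> m' \<longrightarrow> inv_into UNIV \<phi> (m, b) \<le> inv_into UNIV \<phi> (m', b))"

text \<open>Direct sum $\Omega(\alpha') \oplus n$: carrier nat <+> {..<n}, no comparabilities across.\<close>
definition dsum_le :: "(nat \<Rightarrow> nat \<Rightarrow> bool) \<Rightarrow> nat + nat \<Rightarrow> nat + nat \<Rightarrow> bool" where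
  "dsum_le le u v = (case (u, v) of
      (Inl x, Inl y) \<Rightarrow> le x y
    | (Inr i, Inr j) \<Rightarrow> i \<le> j
    | _ \<Rightarrow> False)"

definition S_alpha_carrier :: "nat \<Rightarrow> (nat + nat) set" where
  "S_alpha_carrier n = (UNIV :: nat set) <+> {..<n}"


end

theory Submission
  imports Defs
begin

text \<open>
  Write \<open>\<alpha>\<close> as \<open>\<omega>\<alpha>' + n\<close> via an isomorphism \<open>h\<close>. Composing \<open>h\<close> with \<open>\<phi>\<^sup>-\<^sup>1 \<oplus> id\<close> gives a map
  \<open>e\<close> from \<open>\<alpha>\<close> into \<open>S\<^sub>\<alpha>\<close> which reflects the order, and then \<open>X \<mapsto> {Z \<in> Q\<^sub>\<alpha>. Z \<subseteq> \<down>e(X)}\<close>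
  embeds the chain of initial segments of \<open>\<alpha>\<close> into the ideals of \<open>Q\<^sub>\<alpha>\<close>.

  For a sierpinskisation given by an enumeration of \<open>\<alpha>\<close>, send the \<open>k\<close>-th element of
  \<open>\<Omega>(\<alpha>')\<close> to a position of the same copy of \<open>\<omega>\<close>, choosing these positions strictly
  increasing in \<open>k\<close> and beyond the positions of the final \<open>n\<close> points, which are sent to
  their own positions. Monotonicity of \<open>\<phi>\<close> makes this map \<open>t\<close> order-reflecting, and any
  order-reflecting map with finite down-sets in its domain yields the join-preserving
  embedding \<open>Z \<mapsto> \<down>t(Z)\<close>.
\<close>

lemma fin_inits_empty: "{} \<in> fin_inits P le"
  unfolding fin_inits_def down_def by auto

lemma fin_inits_Un:
  assumes "X \<in> fin_inits P le" and "Y \<in> fin_inits P le"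
  shows "X \<union> Y \<in> fin_inits P le"
proof -
  obtain F G where "finite F" "F \<subseteq> P" "X = down P le F" "finite G" "G \<subseteq> P" "Y = down P le G"
    using assms unfolding fin_inits_def by blast
  moreover have "down P le (F \<union> G) = down P le F \<union> down P le G"
    by (auto simp: down_def)
  ultimately show ?thesis
    unfolding fin_inits_def by (metis (mono_tags, lifting) finite_UnI le_sup_iff mem_Collect_eq)
qed

lemma fin_inits_Union: "finite XX \<Longrightarrow> XX \<subseteq> fin_inits P le \<Longrightarrow> \<Union>XX \<in> fin_inits P le"
  by (induction XX rule: finite_induct) (auto simp: fin_inits_empty fin_inits_Un)

lemma is_lub_subset_iff_Union: "\<Union>X \<in> Q \<Longrightarrow> is_lub Q (\<subseteq>) X s \<longleftrightarrow> s = \<Union>X"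
  unfolding is_lub_def by blast

lemma join_semilattice_bot_fin_inits: "join_semilattice_bot (fin_inits P le) (\<subseteq>)"
  unfolding join_semilattice_bot_def po_on_def
  using fin_inits_empty fin_inits_Un is_lub_subset_iff_Union[of "{_, _}"] by auto blast

lemma in_J_fin_inits_of_reflecting:
  assumes e_in: "\<And>x. x \<in> A \<Longrightarrow> e x \<in> P"
    and e_refl: "\<And>x. x \<in> A \<Longrightarrow> le (e x) (e x)"
    and e_reflects: "\<And>x y. x \<in> A \<Longrightarrow> y \<in> A \<Longrightarrow> le (e x) (e y) \<Longrightarrow> leA x y"
  shows "in_J A leA (fin_inits P le) (\<subseteq>)"
proof -
  define I where "I X = {Z \<in> fin_inits P le. Z \<subseteq> down P le (e ` X)}" for X
  have "ideal_of (fin_inits P le) (\<subseteq>) (I X)" for X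
    unfolding ideal_of_def init_seg_def I_def
    using fin_inits_empty[of P le] fin_inits_Un[of _ P le] by auto (meson Un_least sup_ge1 sup_ge2)
  moreover have "X \<subseteq> Y \<longleftrightarrow> I X \<subseteq> I Y" if X: "init_seg A leA X" and Y: "init_seg A leA Y" for X Y
  proof
    assume "X \<subseteq> Y"
    then show "I X \<subseteq> I Y" by (fastforce simp: I_def down_def)
  next
    assume IXY: "I X \<subseteq> I Y"
    show "X \<subseteq> Y"
    proof
      fix x assume "x \<in> X"
      then have "x \<in> A" using X by (auto simp: init_seg_def)
      have "down P le {e x} \<in> I X"
        unfolding I_def fin_inits_def using e_in[OF \<open>x \<in> A\<close>] \<open>x \<in> X\<close> by (auto simp: down_def)
      moreover have "e x \<in> down P le {e x}"
        using e_in[OF \<open>x \<in> A\<close>] e_refl[OF \<open>x \<in> A\<close>] by (auto simp: down_def)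
      ultimately have "e x \<in> down P le (e ` Y)"
        using IXY by (auto simp: I_def)
      then obtain y where "y \<in> Y" "le (e x) (e y)"
        by (auto simp: down_def)
      moreover have "y \<in> A" using \<open>y \<in> Y\<close> Y by (auto simp: init_seg_def)
      ultimately show "x \<in> Y" using e_reflects \<open>x \<in> A\<close> Y by (auto simp: init_seg_def)
    qed
  qed
  ultimately show ?thesis
    unfolding in_J_def using join_semilattice_bot_fin_inits by blast
qed

lemma join_pres_emb_down_image:
  assumes trans: "\<And>x y z. x \<in> P \<Longrightarrow> y \<in> P \<Longrightarrow> z \<in> P \<Longrightarrow> le x y \<Longrightarrow> le y z \<Longrightarrow> le x z"
    and t_in: "\<And>x. x \<in> P \<Longrightarrow> t x \<in> P'"
    and t_refl: "\<And>x. x \<in> P \<Longrightarrow> le' (t x) (t x)"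
    and t_reflects: "\<And>x y. x \<in> P \<Longrightarrow> y \<in> P \<Longrightarrow> le' (t x) (t y) \<Longrightarrow> le x y"
    and finite: "\<And>Z. Z \<in> fin_inits P le \<Longrightarrow> finite Z"
  shows "join_pres_emb (fin_inits P le) (\<subseteq>) (fin_inits P' le') (\<subseteq>) (\<lambda>Z. down P' le' (t ` Z))"
proof -
  have sub: "Z \<subseteq> P" if "Z \<in> fin_inits P le" for Z
    using that by (auto simp: fin_inits_def down_def)
  have img: "down P' le' (t ` Z) \<in> fin_inits P' le'" if "Z \<in> fin_inits P le" for Z
    unfolding fin_inits_def using finite[OF that] sub[OF that] t_in by blast
  have reflects: "Z \<subseteq> Z'" if Z: "Z \<in> fin_inits P le" and Z': "Z' \<in> fin_inits P le"
    and down_sub: "down P' le' (t ` Z) \<subseteq> down P' le' (t ` Z')" for Z Z'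
  proof
    fix z assume "z \<in> Z"
    then have "z \<in> P" using sub[OF Z] by auto
    then have "t z \<in> down P' le' (t ` Z)" using \<open>z \<in> Z\<close> t_in t_refl by (auto simp: down_def)
    then obtain w where w: "w \<in> Z'" "le' (t z) (t w)" using down_sub by (auto simp: down_def)
    then have "w \<in> P" using sub[OF Z'] by auto
    obtain F where F: "F \<subseteq> P" "Z' = down P le F" using Z' by (auto simp: fin_inits_def)
    then obtain y where "y \<in> F" "le w y" using w by (auto simp: down_def)
    then have "le z y"
      using trans[OF \<open>z \<in> P\<close> \<open>w \<in> P\<close>] t_reflects[OF \<open>z \<in> P\<close> \<open>w \<in> P\<close> w(2)] F by auto
    then show "z \<in> Z'" using F \<open>y \<in> F\<close> \<open>z \<in> P\<close> by (auto simp: down_def)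
  qed
  have joins: "is_lub (fin_inits P' le') (\<subseteq>) ((\<lambda>Z. down P' le' (t ` Z)) ` X) (down P' le' (t ` s))"
    if "finite X" "X \<subseteq> fin_inits P le" "is_lub (fin_inits P le) (\<subseteq>) X s" for X s
  proof -
    have "\<Union>X \<in> fin_inits P le" using fin_inits_Union that(1,2) by blast
    then have "s = \<Union>X" using is_lub_subset_iff_Union that(3) by blast
    then have "down P' le' (t ` s) = \<Union>((\<lambda>Z. down P' le' (t ` Z)) ` X)" by (auto simp: down_def)
    moreover have "down P' le' (t ` s) \<in> fin_inits P' le'" using img \<open>\<Union>X \<in> fin_inits P le\<close> \<open>s = \<Union>X\<close> by blast
    ultimately show ?thesis using is_lub_subset_iff_Union by metis
  qed
  show ?thesis
    unfolding join_pres_emb_def using img reflects joins by (auto simp: down_def)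
qed

lemma strict_mono_selection:
  fixes S :: "nat \<Rightarrow> nat set"
  assumes "\<And>x. infinite (S x)"
  obtains s where "strict_mono s" and "\<And>x. s x \<in> S x"
proof -
  have above: "\<exists>p. q < p \<and> p \<in> S x" for q x
    using assms[of x] by (auto simp: infinite_nat_iff_unbounded)
  define s where "s = rec_nat (LEAST p. p \<in> S 0) (\<lambda>x q. LEAST p. q < p \<and> p \<in> S (Suc x))"
  have "s 0 \<in> S 0"
    using above[of 0 0] by (auto simp: s_def intro: LeastI_ex)
  moreover have "s x < s (Suc x) \<and> s (Suc x) \<in> S (Suc x)" for x
    using LeastI_ex[OF above[of "s x" "Suc x"]] by (simp add: s_def)
  ultimately have "s x \<in> S x" for x
    by (cases x) auto
  moreover have "strict_mono s"
    using \<open>\<And>x. s x < s (Suc x) \<and> _\<close> by (simp add: strict_mono_Suc_iff)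
  ultimately show thesis using that by blast
qed

lemma omega_times_le_refl: "omega_times_le leB p p"
  by (simp add: omega_times_le_def)

lemma omega_times_le_trans:
  assumes "lin_on B leB" and "snd p \<in> B" "snd q \<in> B" "snd r \<in> B"
    and "omega_times_le leB p q" "omega_times_le leB q r"
  shows "omega_times_le leB p r"
proof -
  have "leB (snd p) (snd q) \<Longrightarrow> leB (snd q) (snd r) \<Longrightarrow> leB (snd p) (snd r)"
    and "leB (snd p) (snd q) \<Longrightarrow> leB (snd q) (snd p) \<Longrightarrow> snd p = snd q"
    using assms(1-4) unfolding lin_on_def po_on_def by blast+
  then show ?thesis using assms(5,6) unfolding omega_times_le_def by auto
qed

lemma omega_times_plus_le_refl: "omega_times_plus_le leB u u"
  by (cases u) (simp_all add: omega_times_plus_le_def omega_times_le_refl)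

lemma dsum_sierp_le_refl:
  assumes "\<And>x. leC (\<psi> x) (\<psi> x)"
  shows "dsum_le (sierp_le leC \<psi>) u u"
  using assms by (cases u) (auto simp: dsum_le_def sierp_le_def)

lemma dsum_sierp_le_trans:
  assumes "\<And>x y z. leC (\<psi> x) (\<psi> y) \<Longrightarrow> leC (\<psi> y) (\<psi> z) \<Longrightarrow> leC (\<psi> x) (\<psi> z)"
    and "dsum_le (sierp_le leC \<psi>) u v" "dsum_le (sierp_le leC \<psi>) v w"
  shows "dsum_le (sierp_le leC \<psi>) u w"
  using assms by (cases u; cases v; cases w) (auto simp: dsum_le_def sierp_le_def)

lemma finite_fin_inits_dsum_sierp:
  assumes "Z \<in> fin_inits (S_alpha_carrier n) (dsum_le (sierp_le leC \<psi>))"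
  shows "finite Z"
proof -
  obtain F where F: "finite F" "Z = down (S_alpha_carrier n) (dsum_le (sierp_le leC \<psi>)) F"
    using assms by (auto simp: fin_inits_def)
  have "Z \<subseteq> (\<Union>x\<in>F. Inl ` {..case_sum id id x} \<union> Inr ` {..case_sum id id x})"
  proof
    fix u assume "u \<in> Z"
    then obtain x where "x \<in> F" "dsum_le (sierp_le leC \<psi>) u x"
      using F by (auto simp: down_def)
    then show "u \<in> (\<Union>x\<in>F. Inl ` {..case_sum id id x} \<union> Inr ` {..case_sum id id x})"
      by (intro UN_I[OF \<open>x \<in> F\<close>]) (cases u; cases x; auto simp: dsum_le_def sierp_le_def)
  qed
  moreover have "finite (\<Union>x\<in>F. Inl ` {..case_sum id id x} \<union> Inr ` {..case_sum id id x})"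
    using F(1) by auto
  ultimately show ?thesis by (rule finite_subset)
qed

lemma sierp_le_monotonic_sierp_mapI:
  assumes "monotonic_sierp_map B \<phi>" and "x \<le> y"
    and "snd (\<phi> x) \<noteq> snd (\<phi> y) \<Longrightarrow> leB (snd (\<phi> x)) (snd (\<phi> y))"
  shows "sierp_le (omega_times_le leB) \<phi> x y"
proof -
  have \<phi>: "bij_betw \<phi> UNIV (UNIV \<times> B)"
    and copy_mono: "\<And>b m m'. b \<in> B \<Longrightarrow> m \<le> m' \<Longrightarrow> inv_into UNIV \<phi> (m, b) \<le> inv_into UNIV \<phi> (m', b)"
    using assms(1) unfolding monotonic_sierp_map_def by blast+
  have "fst (\<phi> x) \<le> fst (\<phi> y)" if same_copy: "snd (\<phi> x) = snd (\<phi> y)"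
  proof (rule ccontr)
    assume "\<not> fst (\<phi> x) \<le> fst (\<phi> y)"
    moreover have "\<phi> y \<in> UNIV \<times> B" using bij_betwE[OF \<phi>] by blast
    then have "snd (\<phi> y) \<in> B" by auto
    ultimately have "inv_into UNIV \<phi> (fst (\<phi> y), snd (\<phi> y)) \<le> inv_into UNIV \<phi> (fst (\<phi> x), snd (\<phi> x))"
      using copy_mono[of "snd (\<phi> y)" "fst (\<phi> y)" "fst (\<phi> x)"] same_copy by simp
    then have "y \<le> x" using \<phi> by (simp add: bij_betw_def)
    then show False using \<open>x \<le> y\<close> \<open>\<not> fst (\<phi> x) \<le> fst (\<phi> y)\<close> by simp
  qed
  then show ?thesis using assms(2,3) by (auto simp: sierp_le_def omega_times_le_def)
qed

lemma infinite_positions_in_copy: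
  assumes "bij_betw \<theta> UNIV (omega_times_plus B n)" and "b \<in> B"
  shows "infinite {p. \<exists>m. \<theta> p = Inl (m, b)}"
proof
  assume "finite {p. \<exists>m. \<theta> p = Inl (m, b)}"
  then have "finite (\<theta> ` {p. \<exists>m. \<theta> p = Inl (m, b)})" by blast
  moreover have "range (\<lambda>m. Inl (m, b)) \<subseteq> \<theta> ` {p. \<exists>m. \<theta> p = Inl (m, b)}"
  proof safe
    fix m
    have "Inl (m, b) \<in> range \<theta>"
      using assms by (auto simp: bij_betw_def omega_times_plus_def)
    then obtain p where "\<theta> p = Inl (m, b)" by (metis rangeE)
    then show "Inl (m, b) \<in> \<theta> ` {p. \<exists>m. \<theta> p = Inl (m, b)}"
      by (metis (mono_tags, lifting) image_eqI mem_Collect_eq)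
  qed
  moreover have "infinite (range (\<lambda>m. Inl (m, b) :: (nat \<times> _) + nat))"
    by (rule range_inj_infinite) (simp add: inj_def)
  ultimately show False using finite_subset by blast
qed

lemma in_J_fin_inits_S_alpha:
  assumes "order_iso A leA (omega_times_plus B n) (omega_times_plus_le leB)"
    and \<phi>: "bij_betw \<phi> UNIV (UNIV \<times> B)"
  shows "in_J A leA (fin_inits (S_alpha_carrier n) (dsum_le (sierp_le (omega_times_le leB) \<phi>))) (\<subseteq>)"
proof -
  obtain h where h: "bij_betw h A (omega_times_plus B n)"
    and h_iso: "\<And>x y. x \<in> A \<Longrightarrow> y \<in> A \<Longrightarrow> leA x y \<longleftrightarrow> omega_times_plus_le leB (h x) (h y)"
    using assms(1) unfolding order_iso_def by blast
  have h_in: "h x \<in> (UNIV \<times> B) <+> {..<n}" if "x \<in> A" for x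
    using h that by (auto simp: bij_betw_def omega_times_plus_def)
  have \<phi>_inv: "\<phi> (inv_into UNIV \<phi> p) = p" if "p \<in> UNIV \<times> B" for p
    using \<phi> that by (intro f_inv_into_f) (auto simp: bij_betw_def)
  show ?thesis
  proof (rule in_J_fin_inits_of_reflecting[where e = "map_sum (inv_into UNIV \<phi>) id \<circ> h"])
    fix x assume "x \<in> A"
    then show "(map_sum (inv_into UNIV \<phi>) id \<circ> h) x \<in> S_alpha_carrier n"
      using h_in[OF \<open>x \<in> A\<close>] by (cases "h x") (auto simp: S_alpha_carrier_def)
    show "dsum_le (sierp_le (omega_times_le leB) \<phi>) ((map_sum (inv_into UNIV \<phi>) id \<circ> h) x)
        ((map_sum (inv_into UNIV \<phi>) id \<circ> h) x)"
      by (rule dsum_sierp_le_refl) (rule omega_times_le_refl)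
  next
    fix x y assume "x \<in> A" "y \<in> A"
      and le: "dsum_le (sierp_le (omega_times_le leB) \<phi>) ((map_sum (inv_into UNIV \<phi>) id \<circ> h) x)
        ((map_sum (inv_into UNIV \<phi>) id \<circ> h) y)"
    then have "omega_times_plus_le leB (h x) (h y)"
      using h_in[OF \<open>x \<in> A\<close>] h_in[OF \<open>y \<in> A\<close>] \<phi>_inv
      by (cases "h x"; cases "h y") (auto simp: dsum_le_def sierp_le_def omega_times_plus_le_def)
    then show "leA x y" using h_iso \<open>x \<in> A\<close> \<open>y \<in> A\<close> by blast
  qed
qed

lemma S_alpha_reflecting_map:
  fixes \<theta> :: "nat \<Rightarrow> (nat \<times> 'b) + nat"
  assumes \<theta>: "bij_betw \<theta> UNIV (omega_times_plus B n)" and \<phi>: "monotonic_sierp_map B \<phi>"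
  obtains t where "\<And>z w. z \<in> S_alpha_carrier n \<Longrightarrow> w \<in> S_alpha_carrier n \<Longrightarrow>
      sierp_le (omega_times_plus_le leB) \<theta> (t z) (t w) \<Longrightarrow>
      dsum_le (sierp_le (omega_times_le leB) \<phi>) z w"
proof -
  define pos where "pos i = inv_into UNIV \<theta> (Inr i)" for i
  have \<theta>_pos: "\<theta> (pos i) = Inr i" if "i < n" for i
    unfolding pos_def using \<theta> that by (intro f_inv_into_f) (auto simp: bij_betw_def omega_times_plus_def)
  define K where "K = Suc (\<Sum>i<n. pos i)"
  have pos_less_K: "pos i < K" if "i < n" for i
    using member_le_sum[of i "{..<n}" pos] that by (simp add: K_def)
  have copy_in_B: "snd (\<phi> x) \<in> B" for x
    using bij_betwE[OF \<phi>[unfolded monotonic_sierp_map_def, THEN conjunct1]] by (metis UNIV_I mem_Times_iff)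
  text \<open>Each point of the copy \<open>snd (\<phi> x)\<close> of \<open>\<omega>\<close> is sent to a position of that copy, beyond
    the positions of the finite summand and increasing in \<open>x\<close>.\<close>
  obtain s where s: "strict_mono s"
    and s_copy: "\<And>x. s x \<in> {p. \<exists>m. \<theta> p = Inl (m, snd (\<phi> x))} - {..<K}"
    using strict_mono_selection[of "\<lambda>x. {p. \<exists>m. \<theta> p = Inl (m, snd (\<phi> x))} - {..<K}"]
      Diff_infinite_finite[OF finite_lessThan infinite_positions_in_copy[OF \<theta> copy_in_B]] by blast
  show thesis
  proof (rule that[of "case_sum s pos"])
    fix z w assume z: "z \<in> S_alpha_carrier n" and w: "w \<in> S_alpha_carrier n"
      and le: "sierp_le (omega_times_plus_le leB) \<theta> (case_sum s pos z) (case_sum s pos w)"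
    show "dsum_le (sierp_le (omega_times_le leB) \<phi>) z w"
    proof (cases z; cases w)
      fix x y assume "z = Inl x" "w = Inl y"
      obtain m m' where "\<theta> (s x) = Inl (m, snd (\<phi> x))" "\<theta> (s y) = Inl (m', snd (\<phi> y))"
        using s_copy by blast
      then have "s x \<le> s y" "snd (\<phi> x) \<noteq> snd (\<phi> y) \<Longrightarrow> leB (snd (\<phi> x)) (snd (\<phi> y))"
        using le \<open>z = Inl x\<close> \<open>w = Inl y\<close>
        by (auto simp: sierp_le_def omega_times_plus_le_def omega_times_le_def)
      moreover from this have "x \<le> y" using s by (simp add: strict_mono_less_eq)
      ultimately show ?thesis
        using sierp_le_monotonic_sierp_mapI[OF \<phi>] \<open>z = Inl x\<close> \<open>w = Inl y\<close> by (simp add: dsum_le_def)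
    next
      fix x j assume "z = Inl x" "w = Inr j"
      then have "pos j < K" "K \<le> s x" using w pos_less_K s_copy[of x] by (auto simp: S_alpha_carrier_def)
      then show ?thesis using le \<open>z = Inl x\<close> \<open>w = Inr j\<close> by (auto simp: sierp_le_def)
    next
      fix i y assume "z = Inr i" "w = Inl y"
      then show ?thesis using le z s_copy[of y] \<theta>_pos
        by (auto simp: S_alpha_carrier_def sierp_le_def omega_times_plus_le_def)
    next
      fix i j assume "z = Inr i" "w = Inr j"
      then show ?thesis using le z w \<theta>_pos
        by (auto simp: S_alpha_carrier_def sierp_le_def omega_times_plus_le_def dsum_le_def)
    qed
  qed
qed

lemma join_pres_emb_fin_inits_S_alpha:
  assumes "lin_on B leB"
    and "order_iso A leA (omega_times_plus B n) (omega_times_plus_le leB)"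
    and \<phi>: "monotonic_sierp_map B \<phi>" and \<psi>: "bij_betw \<psi> UNIV A"
  shows "\<exists>f. join_pres_emb (fin_inits (S_alpha_carrier n) (dsum_le (sierp_le (omega_times_le leB) \<phi>))) (\<subseteq>)
                          (fin_inits UNIV (sierp_le leA \<psi>)) (\<subseteq>) f"
proof -
  obtain h where h: "bij_betw h A (omega_times_plus B n)"
    and h_iso: "\<And>x y. x \<in> A \<Longrightarrow> y \<in> A \<Longrightarrow> leA x y \<longleftrightarrow> omega_times_plus_le leB (h x) (h y)"
    using assms(2) unfolding order_iso_def by blast
  have \<psi>_le: "sierp_le leA \<psi> = sierp_le (omega_times_plus_le leB) (h \<circ> \<psi>)"
    using h_iso bij_betwE[OF \<psi>] by (auto simp: fun_eq_iff sierp_le_def)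
  obtain t where t: "\<And>z w. z \<in> S_alpha_carrier n \<Longrightarrow> w \<in> S_alpha_carrier n \<Longrightarrow>
      sierp_le (omega_times_plus_le leB) (h \<circ> \<psi>) (t z) (t w) \<Longrightarrow>
      dsum_le (sierp_le (omega_times_le leB) \<phi>) z w"
    using S_alpha_reflecting_map[OF bij_betw_trans[OF \<psi> h] \<phi>] by blast
  have copy_in_B: "snd (\<phi> x) \<in> B" for x
    using bij_betwE[OF \<phi>[unfolded monotonic_sierp_map_def, THEN conjunct1]] by (metis UNIV_I mem_Times_iff)
  show ?thesis
    unfolding \<psi>_le
  proof (rule exI, rule join_pres_emb_down_image[where t = t])
    show "dsum_le (sierp_le (omega_times_le leB) \<phi>) u w"
      if "dsum_le (sierp_le (omega_times_le leB) \<phi>) u v" "dsum_le (sierp_le (omega_times_le leB) \<phi>) v w"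
      for u v w
      using dsum_sierp_le_trans omega_times_le_trans[OF assms(1) copy_in_B copy_in_B copy_in_B] that
      by blast
    show "sierp_le (omega_times_plus_le leB) (h \<circ> \<psi>) (t z) (t z)" for z
      by (simp add: sierp_le_def omega_times_plus_le_refl)
  qed (use t finite_fin_inits_dsum_sierp in auto)
qed

theorem lemma2p8:
  fixes A :: "'a set" and leA :: "'a \<Rightarrow> 'a \<Rightarrow> bool"
    and B :: "'b set" and leB :: "'b \<Rightarrow> 'b \<Rightarrow> bool"
    and n :: nat and \<phi> :: "nat \<Rightarrow> nat \<times> 'b"
  assumes "lin_on A leA" and "countable A" and "infinite A"
    and "lin_on B leB" and "countable B"
    and "order_iso A leA (omega_times_plus B n) (omega_times_plus_le leB)"
    and "monotonic_sierp_map B \<phi>"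
  shows "in_J A leA
           (fin_inits (S_alpha_carrier n) (dsum_le (sierp_le (omega_times_le leB) \<phi>)))
           (\<subseteq>)
       \<and> (\<forall>\<psi>. bij_betw \<psi> (UNIV :: nat set) A \<longrightarrow>
            (\<exists>f. join_pres_emb
                   (fin_inits (S_alpha_carrier n) (dsum_le (sierp_le (omega_times_le leB) \<phi>))) (\<subseteq>)
                   (fin_inits (UNIV :: nat set) (sierp_le leA \<psi>)) (\<subseteq>) f))"
proof -
  have "bij_betw \<phi> UNIV (UNIV \<times> B)"
    using assms(7) unfolding monotonic_sierp_map_def by blast
  then show ?thesis
    using in_J_fin_inits_S_alpha join_pres_emb_fin_inits_S_alpha assms(4,6,7) by blast
qed

end
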